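(* Let $g$ be a graphon whose degree function $d_g$ is monotonic nondecreasing on $[0,1]$. Suppose that $g$ maximizes the entropy $\mathcal S$ among all graphons $h$ with the same degree function, i.e. $\mathcal S(g)\ge \mathcal S(h)$ for every graphon $h$ with $d_h=d_g$ almost everywhere. Then $g$ is doubly monotonic nondecreasing: there is a Lebesgue-null set $N\subset[0,1]^2$ such that for all $x_1\le x_2$ and $y$ with $(x_1,y),(x_2,y)\notin N$ we have $g(x_1,y)\le g(x_2,y)$, and for all $y_1\le y_2$ and $x$ with $(x,y_1),(x,y_2)\notin N$ we have $g(x,y_1)\le g(x,y_2)$.
   Context: A graphon is a symmetric measurable function $g:[0,1]^2\to[0,1]$. Its degree function is $d_g(x)=\int_0^1 g(x,y)\,dy$. The Shannon entropy of a graphon is $\mathcal S(g)=\frac12\int_{[0,1]^2}S(g(x,y))\,dx\,dy$, where $S(w)=-w\ln w-(1-w)\ln(1-w)$ for $w\in[0,1]$ (with $0\ln 0=0$). *)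

theory Defs
  imports "HOL-Analysis.Analysis"
begin

definition graphon :: "(real \<Rightarrow> real \<Rightarrow> real) \<Rightarrow> bool" where
  "graphon g \<longleftrightarrow>
     (\<lambda>(x, y). g x y) \<in> borel_measurable (lebesgue_on ({0..1} \<times> {0..1})) \<and>
     (\<forall>x\<in>{0..1}. \<forall>y\<in>{0..1}. g x y = g y x \<and> 0 \<le> g x y \<and> g x y \<le> 1)"

definition degree_fun :: "(real \<Rightarrow> real \<Rightarrow> real) \<Rightarrow> real \<Rightarrow> real" where
  "degree_fun g x = integral\<^sup>L (lebesgue_on {0..1}) (\<lambda>y. g x y)"

definition xlnx :: "real \<Rightarrow> real" where
  "xlnx w = (if w = 0 then 0 else w * ln w)"

definition bin_entropy :: "real \<Rightarrow> real" where
  "bin_entropy w = - xlnx w - xlnx (1 - w)"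

definition graphon_entropy :: "(real \<Rightarrow> real \<Rightarrow> real) \<Rightarrow> real" where
  "graphon_entropy g =
     integral\<^sup>L (lebesgue_on ({0..1} \<times> {0..1})) (\<lambda>(x, y). bin_entropy (g x y)) / 2"

end

theory Submission
  imports Defs "HOL-Real_Asymp.Real_Asymp"
begin

text \<open>Work with a Borel version \<open>G\<close> of the graphon. Suppose that for some shift \<open>c\<close> the row \<open>x\<close>
  exceeded the row \<open>x + c\<close> on a set of positive measure. Since the degree is nondecreasing, the
  row \<open>x + c\<close> then exceeds the row \<open>x\<close> somewhere else with at least the same mass, and moving
  mass between the two rows towards equality, symmetrically in rows and columns, preserves all
  degrees and strictly increases the entropy by strict concavity of \<open>S\<close>, contradicting maximality.
  For the row and column moves not to interact, the transfer is made only for \<open>x\<close> in a short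
  interval \<open>I\<close> and on columns outside \<open>I \<union> (I + c)\<close>; the resulting error is of order \<open>|I|\<close> and
  disappears when \<open>[0, 1 - c]\<close> is covered by ever shorter intervals. Thus \<open>G(x, y) \<le> G(x + c, y)\<close>
  almost everywhere for every \<open>c\<close>; Fubini in \<open>(x, y, c)\<close> turns this into monotonicity off a single
  null set, and symmetry of \<open>G\<close> gives the other variable.\<close>

section \<open>Binary entropy\<close>

lemma continuous_on_xlnx: "continuous_on {0..} xlnx"
proof -
  have "continuous (at x within {0..}) xlnx" if "x \<ge> 0" for x
  proof (cases "x = 0")
    case True
    have "((\<lambda>w::real. w * ln w) \<longlongrightarrow> 0) (at_right 0)" by real_asymp
    then have "(xlnx \<longlongrightarrow> 0) (at_right 0)"
      by (rule Lim_transform_eventually) (auto simp: xlnx_def eventually_at_right_less)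
    then show ?thesis
      using True by (simp add: continuous_within xlnx_def at_within_Ici_at_right)
  next
    case False
    with that have "x > 0" by simp
    have "isCont (\<lambda>w. w * ln w) x" using \<open>x > 0\<close> by (intro continuous_intros) auto
    moreover have "\<forall>\<^sub>F w in nhds x. w * ln w = xlnx w"
      using eventually_nhds_in_open[of "{0<..}" x] \<open>x > 0\<close>
      by (auto elim!: eventually_mono simp: xlnx_def)
    ultimately have "isCont xlnx x"
      using isCont_cong by fastforce
    then show ?thesis by (simp add: continuous_at_imp_continuous_within)
  qed
  then show ?thesis by (simp add: continuous_on_eq_continuous_within)
qed

lemma continuous_on_bin_entropy: "continuous_on {0..1} bin_entropy"
proof -
  have "continuous_on {0..1} xlnx"
    using continuous_on_xlnx by (rule continuous_on_subset) auto
  moreover have "continuous_on {0..1} (\<lambda>w. xlnx (1 - w))"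
    by (intro continuous_on_compose2[OF continuous_on_xlnx]) (auto intro!: continuous_intros)
  ultimately show ?thesis
    unfolding bin_entropy_def[abs_def] by (intro continuous_intros)
qed

lemma bin_entropy_has_real_derivative:
  assumes "0 < u" "u < 1"
  shows "(bin_entropy has_real_derivative (ln (1 - u) - ln u)) (at u)"
proof -
  have "((\<lambda>w. - (w * ln w) - (1 - w) * ln (1 - w)) has_real_derivative (ln (1 - u) - ln u)) (at u)"
    using assms by (auto intro!: derivative_eq_intros)
  moreover have "\<forall>\<^sub>F w in nhds u. - (w * ln w) - (1 - w) * ln (1 - w) = bin_entropy w"
    using eventually_nhds_in_open[of "{0<..<1}" u] assms
    by (auto elim!: eventually_mono simp: bin_entropy_def xlnx_def)
  ultimately show ?thesis
    by (simp add: DERIV_cong_ev[OF refl _ refl, symmetric])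
qed

text \<open>Strict concavity by the mean value theorem: the two mean value points satisfy
  \<open>z\<^sub>2 < z\<^sub>1\<close>, and \<open>S'\<close> is decreasing.\<close>

lemma bin_entropy_transfer_less:
  assumes "0 \<le> b" "a \<le> 1" "0 < t" "b + t \<le> a - t"
  shows "bin_entropy a + bin_entropy b < bin_entropy (a - t) + bin_entropy (b + t)"
proof -
  have cont: "continuous_on {u..v} bin_entropy" if "0 \<le> u" "v \<le> 1" for u v
    using continuous_on_bin_entropy by (rule continuous_on_subset) (use that in auto)
  have diff: "bin_entropy differentiable (at x)" if "0 < x" "x < 1" for x
    using bin_entropy_has_real_derivative[OF that] real_differentiable_def by blast
  obtain l1 z1 where z1: "a - t < z1" "z1 < a" "DERIV bin_entropy z1 :> l1"
    "bin_entropy a - bin_entropy (a - t) = t * l1"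
    using MVT[of "a - t" a bin_entropy] cont[of "a - t" a] diff assms by force
  obtain l2 z2 where z2: "b < z2" "z2 < b + t" "DERIV bin_entropy z2 :> l2"
    "bin_entropy (b + t) - bin_entropy b = t * l2"
    using MVT[of b "b + t" bin_entropy] cont[of b "b + t"] diff assms by force
  have "l1 = ln (1 - z1) - ln z1" "l2 = ln (1 - z2) - ln z2"
    using DERIV_unique[OF z1(3) bin_entropy_has_real_derivative]
      DERIV_unique[OF z2(3) bin_entropy_has_real_derivative] z1 z2 assms by auto
  moreover have "ln (1 - z1) < ln (1 - z2)" "ln z2 < ln z1"
    using z1 z2 assms by auto
  ultimately have "t * l1 < t * l2" using assms by simp
  then show ?thesis using z1(4) z2(4) by simp
qed

lemma bin_entropy_transfer_le:
  assumes "0 \<le> b" "a \<le> 1" "0 \<le> t" "b + t \<le> a - t"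
  shows "bin_entropy a + bin_entropy b \<le> bin_entropy (a - t) + bin_entropy (b + t)"
  using bin_entropy_transfer_less[OF assms(1,2) _ assms(4)] assms(3) by (cases "t = 0") auto

lemma abs_bin_entropy_le:
  assumes "0 \<le> w" "w \<le> 1"
  shows "\<bar>bin_entropy w\<bar> \<le> 2"
proof -
  have "\<bar>xlnx u\<bar> \<le> 1" if "0 \<le> u" "u \<le> 1" for u
  proof (cases "u = 0")
    case False
    with that have "u > 0" by simp
    have "ln (1/u) \<le> 1/u - 1" using \<open>u > 0\<close> by (intro ln_le_minus_one) auto
    then have "- (u * ln u) \<le> 1 - u" using \<open>u > 0\<close> by (simp add: ln_div field_simps)
    moreover have "u * ln u \<le> 0" using that \<open>u > 0\<close> by (simp add: mult_nonneg_nonpos)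
    ultimately show ?thesis using that False by (simp add: xlnx_def abs_if)
  qed (simp add: xlnx_def)
  from this[of w] this[of "1 - w"] assms show ?thesis
    unfolding bin_entropy_def abs_le_iff by linarith
qed

lemma borel_measurable_bin_entropy[measurable]: "bin_entropy \<in> borel_measurable borel"
  unfolding bin_entropy_def[abs_def] xlnx_def[abs_def] by measurable

section \<open>Lebesgue measure on the line and the plane\<close>

lemma integrable_bounded_by_indicator:
  fixes f :: "'a \<Rightarrow> real"
  assumes "A \<in> sets M" "emeasure M A < \<infinity>" "f \<in> borel_measurable M"
    and "\<And>x. \<bar>f x\<bar> \<le> B * indicator A x"
  shows "integrable M f"
proof (rule Bochner_Integration.integrable_bound)
  show "integrable M (\<lambda>x. B * indicator A x)"
    using assms(1,2) by (intro integrable_mult_right integrable_real_indicator) auto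
  show "AE x in M. norm (f x) \<le> norm (B * indicator A x)"
    using assms(4) by (auto intro!: AE_I2 order.trans[OF _ abs_ge_self])
qed fact

lemma integrable_indicator_Icc[simp]: "integrable lborel (indicator {a..b::real} :: real \<Rightarrow> real)"
  by (rule integrable_real_indicator) (auto simp: emeasure_lborel_Icc_eq)

lemma integrable_bounded_on_unit_interval:
  fixes f :: "real \<Rightarrow> real"
  assumes "f \<in> borel_measurable lborel" "\<And>y. \<bar>f y\<bar> \<le> 1" "\<And>y. y \<notin> {0..1} \<Longrightarrow> f y = 0"
  shows "integrable lborel f"
  by (rule integrable_bounded_by_indicator[where A="{0..1}" and B=1])
    (use assms in \<open>auto simp: indicator_def\<close>)

abbreviation lborel2 :: "(real \<times> real) measure" where "lborel2 \<equiv> lborel \<Otimes>\<^sub>M lborel"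

lemma sets_lborel2: "sets lborel2 = sets borel"
  by (simp only: lborel_prod sets_lborel)

lemma measurable_compose_lborel2:
  assumes "case_prod F \<in> borel_measurable lborel2" "f \<in> borel_measurable M" "h \<in> borel_measurable M"
  shows "(\<lambda>x. F (f x) (h x)) \<in> borel_measurable M"
proof -
  have "(\<lambda>x. (f x, h x)) \<in> M \<rightarrow>\<^sub>M lborel2"
    using assms by (intro measurable_Pair) (auto simp: measurable_lborel2)
  from measurable_compose[OF this assms(1)] show ?thesis by simp
qed

lemma sets_unit_square[measurable]: "{0..1} \<times> {0..1} \<in> sets (borel :: (real \<times> real) measure)"
  by (intro borel_closed closed_Times) auto

lemma integrable_bounded_on_unit_square:
  fixes f :: "real \<times> real \<Rightarrow> real"
  assumes "f \<in> borel_measurable lborel2" "\<And>z. \<bar>f z\<bar> \<le> B * indicator ({0..1} \<times> {0..1}) z"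
  shows "integrable lborel2 f"
proof (rule integrable_bounded_by_indicator[OF _ _ assms])
  show "emeasure lborel2 ({0..1} \<times> {0..1}) < \<infinity>"
    by (simp add: lborel.emeasure_pair_measure_Times ennreal_mult_less_top)
qed simp

lemma integral_lborel2_translate_fst:
  fixes f :: "real \<times> real \<Rightarrow> real"
  assumes "f \<in> borel_measurable lborel2"
  shows "(\<integral>z. f (fst z + a, snd z) \<partial>lborel2) = integral\<^sup>L lborel2 f"
proof -
  have f: "f \<in> borel_measurable borel" using assms measurable_cong_sets[OF sets_lborel2 refl] by blast
  have "integral\<^sup>L lborel2 f = integral\<^sup>L (distr lborel borel ((+) (a, 0))) f"
    by (simp only: lborel_prod lborel_distr_plus)
  also have "\<dots> = (\<integral>z. f ((a, 0) + z) \<partial>lborel)" by (rule integral_distr) (use f in auto)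
  also have "\<dots> = (\<integral>z. f (fst z + a, snd z) \<partial>lborel)"
    by (intro Bochner_Integration.integral_cong refl) (auto simp: add.commute)
  also have "\<dots> = (\<integral>z. f (fst z + a, snd z) \<partial>lborel2)"
    by (simp only: lborel_prod)
  finally show ?thesis ..
qed

lemma integral_lborel2_swap:
  fixes f :: "real \<times> real \<Rightarrow> real"
  assumes "f \<in> borel_measurable lborel2"
  shows "(\<integral>z. f (snd z, fst z) \<partial>lborel2) = integral\<^sup>L lborel2 f"
  using lborel_pair.integral_product_swap[OF assms] by (simp add: case_prod_beta')

lemma AE_lborel2_translate_fst:
  assumes "{z \<in> space lborel2. P z} \<in> sets lborel2" and "AE z in lborel2. P z"
  shows "AE z in lborel2. P (fst z + a, snd z)"
proof -
  have P: "{z \<in> space borel. P z} \<in> sets borel"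
    using assms(1) unfolding sets_lborel2 by (simp add: space_pair_measure)
  have "AE z in distr lborel borel ((+) (a, 0)). P z"
    using assms(2) by (simp only: lborel_distr_plus lborel_prod)
  then have "AE z in lborel. P ((a, 0) + z)"
    by (subst (asm) AE_distr_iff) (use P in auto)
  then have "AE z in lborel. P (fst z + a, snd z)"
  proof eventually_elim
    case (elim z) then show ?case by (cases z) (simp add: add.commute)
  qed
  then show ?thesis by (simp only: lborel_prod)
qed

lemma AE_lborel2_swap:
  assumes "{z \<in> space lborel2. P z} \<in> sets lborel2" and "AE z in lborel2. P z"
  shows "AE z in lborel2. P (snd z, fst z)"
proof -
  have "AE z in distr lborel2 lborel2 (\<lambda>(x, y). (y, x)). P z"
    using assms(2) by (subst lborel_pair.distr_pair_swap[symmetric])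
  then show ?thesis
    using AE_distr_iff[OF measurable_pair_swap' assms(1)] by (simp add: case_prod_beta')
qed

lemma AE_lborel2_swap_not_in:
  assumes "N \<in> null_sets lborel2"
  shows "AE z in lborel2. (snd z, fst z) \<notin> N"
proof (rule AE_lborel2_swap[OF _ AE_not_in[OF assms]])
  show "{z \<in> space lborel2. z \<notin> N} \<in> sets lborel2"
    using sets.compl_sets[OF null_setsD2[OF assms]] by (simp add: set_diff_eq)
qed

lemma AE_lborel_translateI:
  fixes a :: real
  assumes "{t \<in> space borel. P t} \<in> sets borel" and "AE t in lborel. P (a + t)"
  shows "AE t in lborel. P t"
proof -
  have "AE t in distr lborel borel ((+) a). P t"
    by (subst AE_distr_iff) (use assms in auto)
  then show ?thesis by (simp only: lborel_distr_plus)
qed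

lemma AE_lborel_reflectI:
  assumes "{t \<in> space borel. P t} \<in> sets borel" and "AE t in lborel. P (- t :: real)"
  shows "AE t in lborel. P t"
proof -
  have "AE t in distr lborel borel uminus. P t"
    by (subst AE_distr_iff) (use assms in auto)
  then show ?thesis by (simp only: lborel_distr_uminus)
qed

lemma AE_lborel_translate_not_in:
  fixes Z :: "real set"
  assumes "Z \<in> null_sets lborel"
  shows "AE t in lborel. a + t \<notin> Z"
proof -
  have "AE z in distr lborel borel ((+) a). z \<notin> Z"
    unfolding lborel_distr_plus by (rule AE_not_in[OF assms])
  then show ?thesis
    by (subst (asm) AE_distr_iff) (use assms in \<open>auto simp: null_sets_def\<close>)
qed

lemma AE_obtain_null_set:
  assumes "AE x in M. P x"
  obtains N where "N \<in> null_sets M" "\<And>x. x \<in> space M \<Longrightarrow> x \<notin> N \<Longrightarrow> P x"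
proof -
  from assms obtain N where "{x \<in> space M. \<not> P x} \<subseteq> N" "emeasure M N = 0" "N \<in> sets M"
    by (rule AE_E)
  then show ?thesis using that by blast
qed

lemma AE_lborel_exists_between:
  assumes "AE t in lborel. P t" "a < (b::real)"
  shows "\<exists>t. a < t \<and> t < b \<and> P t"
proof (rule ccontr)
  assume "\<not> ?thesis"
  then have sub: "{a<..<b} \<subseteq> {t \<in> space lborel. \<not> P t}" by auto
  from assms(1) obtain N where N: "{t \<in> space lborel. \<not> P t} \<subseteq> N" "emeasure lborel N = 0" "N \<in> sets lborel"
    by (rule AE_E)
  have "emeasure lborel {a<..<b} \<le> emeasure lborel N"
    by (rule emeasure_mono) (use sub N in auto)
  then show False using N assms(2) by simp
qed

lemma integral_lebesgue_on_eq_lborel: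
  fixes f :: "'a::euclidean_space \<Rightarrow> real"
  assumes "f \<in> borel_measurable lborel" "S \<in> sets borel"
  shows "integral\<^sup>L (lebesgue_on S) f = (\<integral>x. indicator S x * f x \<partial>lborel)"
proof -
  have "integral\<^sup>L (lebesgue_on S) f = integral\<^sup>L lebesgue (\<lambda>x. indicator S x *\<^sub>R f x)"
    by (rule integral_restrict_space) (use assms in auto)
  also have "\<dots> = (\<integral>x. indicator S x * f x \<partial>lborel)"
    by (subst integral_completion) (use assms in auto)
  finally show ?thesis .
qed

lemma AE_lebesgue_onI:
  fixes S :: "'a::euclidean_space set"
  assumes "AE x in lborel. x \<in> S \<longrightarrow> P x" "S \<in> sets borel"
  shows "AE x in lebesgue_on S. P x"
  by (subst AE_restrict_space_iff) (use assms in \<open>auto intro: AE_completion\<close>)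

section \<open>Entropy-maximising Borel graphons\<close>

text \<open>Borel counterparts of \<open>degree_fun\<close> and of twice \<open>graphon_entropy\<close>, on which the
  variational argument is carried out.\<close>

definition lborel_degree :: "(real \<Rightarrow> real \<Rightarrow> real) \<Rightarrow> real \<Rightarrow> real" where
  "lborel_degree G x = (\<integral>y. indicator {0..1} y * G x y \<partial>lborel)"

definition square_entropy :: "(real \<Rightarrow> real \<Rightarrow> real) \<Rightarrow> real" where
  "square_entropy G = (\<integral>z. indicator ({0..1} \<times> {0..1}) z * bin_entropy (case_prod G z) \<partial>lborel2)"

abbreviation pos :: "real \<Rightarrow> real" where "pos r \<equiv> max r 0"

locale entropy_maximiser =
  fixes G :: "real \<Rightarrow> real \<Rightarrow> real" and Z :: "real set"
  assumes G_measurable: "case_prod G \<in> borel_measurable lborel2"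
    and G_sym: "\<And>x y. G x y = G y x"
    and G_nonneg: "\<And>x y. 0 \<le> G x y" and G_le_1: "\<And>x y. G x y \<le> 1"
    and Z_null: "Z \<in> null_sets lborel"
    and degree_mono: "\<And>x1 x2. x1 \<in> {0..1} \<Longrightarrow> x2 \<in> {0..1} \<Longrightarrow> x1 \<notin> Z \<Longrightarrow> x2 \<notin> Z \<Longrightarrow> x1 \<le> x2 \<Longrightarrow>
        lborel_degree G x1 \<le> lborel_degree G x2"
    and entropy_max: "\<And>H. case_prod H \<in> borel_measurable lborel2 \<Longrightarrow> (\<And>x y. H x y = H y x) \<Longrightarrow>
        (\<And>x y. x \<in> {0..1} \<Longrightarrow> y \<in> {0..1} \<Longrightarrow> 0 \<le> H x y \<and> H x y \<le> 1) \<Longrightarrow>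
        (\<And>x. x \<in> {0..1} \<Longrightarrow> lborel_degree H x = lborel_degree G x) \<Longrightarrow>
        square_entropy H \<le> square_entropy G"
begin

lemmas G_measurable'[measurable (raw)] = measurable_compose_lborel2[OF G_measurable]

lemma abs_G_le_1[simp]: "\<bar>G x y\<bar> \<le> 1"
  using G_le_1[of x y] G_nonneg[of x y] by simp

lemma G_diff_bounds[simp]: "G a y - G b y' \<le> 1" "- 1 \<le> G a y - G b y'"
  using G_le_1[of a y] G_nonneg[of b y'] G_nonneg[of a y] G_le_1[of b y'] by linarith+

lemma integrable_row: "integrable lborel (\<lambda>y. indicator {0..1} y * G x y)"
  by (rule integrable_bounded_on_unit_interval) (auto simp: indicator_def)

end

section \<open>The mass transfer\<close>

text \<open>For \<open>x \<in> I\<close>, \<open>w x\<close> moves mass between the rows \<open>x\<close> and \<open>x + c \<in> J\<close>, on the columns \<open>Y\<close>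
  only and always from the larger to the smaller entry; the weights \<open>\<alpha> x\<close>, \<open>\<beta> x\<close> are the masses
  of the two one-sided differences, so that \<open>\<integral> w x = 0\<close>. \<open>P\<close> symmetrises this: row \<open>x\<close> gains
  \<open>w x\<close>, row \<open>x + c\<close> loses it, and likewise for columns. Since \<open>I\<close>, \<open>J\<close>, \<open>Y\<close> are disjoint,
  the row and column parts never overlap.\<close>

locale mass_transfer = entropy_maximiser +
  fixes c p q :: real
  assumes c_pos: "0 < c" and p_nonneg: "0 \<le> p" and p_le_q: "p \<le> q"
    and q_plus_c_le_1: "q + c \<le> 1" and width_less_c: "q - p < c"
begin

definition "I = {p..q}"
definition "J = {p+c..q+c}"
definition "Y = {0..1} - I - J"
definition "\<alpha> x = (\<integral>y. indicator Y y * pos (G (x+c) y - G x y) \<partial>lborel)"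
definition "\<beta> x = (\<integral>y. indicator Y y * pos (G x y - G (x+c) y) \<partial>lborel)"
definition "w x y = indicator I x * indicator Y y *
  (\<beta> x * pos (G (x+c) y - G x y) - \<alpha> x * pos (G x y - G (x+c) y)) / 2"
definition "P x y = w x y - w (x - c) y + w y x - w (y - c) x"
definition "H x y = G x y + P x y"

lemma sets_I_J_Y[measurable]: "I \<in> sets borel" "J \<in> sets borel" "Y \<in> sets borel"
  unfolding I_def J_def Y_def by auto

lemma mem_Y: "y \<in> Y \<Longrightarrow> y \<in> {0..1} \<and> y \<notin> I \<and> y \<notin> J"
  by (auto simp: Y_def)

lemma mem_I: "x \<in> I \<Longrightarrow> x \<in> {0..1} \<and> x \<notin> J \<and> x + c \<in> J \<and> x - c \<notin> I \<and> x - c \<notin> J"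
  using c_pos p_nonneg p_le_q q_plus_c_le_1 width_less_c by (auto simp: I_def J_def)

lemma mem_J: "x \<in> J \<Longrightarrow> x \<in> {0..1} \<and> x \<notin> I \<and> x - c \<in> I"
  using c_pos p_nonneg p_le_q q_plus_c_le_1 width_less_c by (auto simp: I_def J_def)

lemma minus_c_mem_I_iff: "a - c \<in> I \<longleftrightarrow> a \<in> J"
  by (auto simp: I_def J_def)

lemma I_J_disjoint: "I \<inter> J = {}"
  using mem_I by blast

lemma I_J_subset: "I \<subseteq> {0..1}" "J \<subseteq> {0..1}"
  using mem_I mem_J by blast+

lemma integral_indicator_I_J:
  "(\<integral>y. indicator I y \<partial>lborel) = q - p" "(\<integral>y. indicator J y \<partial>lborel) = q - p"
  using p_le_q by (simp_all add: I_def J_def)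

lemma integrable_indicator_I_J:
  "integrable lborel (indicator I :: real \<Rightarrow> real)" "integrable lborel (indicator J :: real \<Rightarrow> real)"
  by (simp_all add: I_def J_def)

lemma integrable_on_Y:
  fixes f :: "real \<Rightarrow> real"
  assumes "f \<in> borel_measurable lborel" "\<And>y. \<bar>f y\<bar> \<le> 1"
  shows "integrable lborel (\<lambda>y. indicator Y y * f y)"
  by (rule integrable_bounded_on_unit_interval) (use assms mem_Y in \<open>auto simp: indicator_def\<close>)

lemma integral_unit_interval_minus_Y:
  fixes f :: "real \<Rightarrow> real"
  assumes f: "f \<in> borel_measurable lborel" "\<And>y. \<bar>f y\<bar> \<le> 1"
  shows "\<bar>(\<integral>y. indicator {0..1} y * f y \<partial>lborel) - (\<integral>y. indicator Y y * f y \<partial>lborel)\<bar> \<le> 2 * (q - p)"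
proof -
  have int_01: "integrable lborel (\<lambda>y. indicator {0..1} y * f y)"
    by (rule integrable_bounded_on_unit_interval) (use f in \<open>auto simp: indicator_def\<close>)
  have "\<bar>(\<integral>y. indicator {0..1} y * f y \<partial>lborel) - (\<integral>y. indicator Y y * f y \<partial>lborel)\<bar>
      = \<bar>\<integral>y. indicator {0..1} y * f y - indicator Y y * f y \<partial>lborel\<bar>"
    using int_01 integrable_on_Y[OF f] by simp
  also have "\<dots> \<le> (\<integral>y. \<bar>indicator {0..1} y * f y - indicator Y y * f y\<bar> \<partial>lborel)"
    by (rule integral_abs_bound)
  also have "\<dots> \<le> (\<integral>y. indicator I y + indicator J y \<partial>lborel)"
  proof (rule integral_mono)
    show "integrable lborel (\<lambda>y. \<bar>indicator {0..1} y * f y - indicator Y y * f y\<bar>)"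
      using int_01 integrable_on_Y[OF f] by simp
    show "integrable lborel (\<lambda>y. indicator I y + indicator J y :: real)"
      using integrable_indicator_I_J by simp
    show "\<bar>indicator {0..1} y * f y - indicator Y y * f y\<bar> \<le> indicator I y + indicator J y" for y
      using f(2)[of y] mem_Y[of y] by (cases "y \<in> {0..1}") (auto simp: indicator_def Y_def)
  qed
  also have "\<dots> = 2 * (q - p)"
    using integrable_indicator_I_J integral_indicator_I_J by simp
  finally show ?thesis .
qed

lemma \<alpha>_measurable[measurable]: "\<alpha> \<in> borel_measurable lborel"
  unfolding \<alpha>_def[abs_def] by measurable

lemma \<beta>_measurable[measurable]: "\<beta> \<in> borel_measurable lborel"
  unfolding \<beta>_def[abs_def] by measurable

lemma integral_Y_bounds:
  fixes f :: "real \<Rightarrow> real"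
  assumes "f \<in> borel_measurable lborel" "\<And>y. 0 \<le> f y" "\<And>y. f y \<le> 1"
  shows "0 \<le> (\<integral>y. indicator Y y * f y \<partial>lborel)" "(\<integral>y. indicator Y y * f y \<partial>lborel) \<le> 1"
proof -
  show "0 \<le> (\<integral>y. indicator Y y * f y \<partial>lborel)"
    by (intro integral_nonneg_AE AE_I2) (simp add: assms)
  have "(\<integral>y. indicator Y y * f y \<partial>lborel) \<le> (\<integral>y. indicator {0..1::real} y \<partial>lborel)"
  proof (rule integral_mono)
    show "integrable lborel (\<lambda>y. indicator Y y * f y)"
      by (rule integrable_on_Y) (use assms in \<open>auto simp: abs_le_iff intro: order.trans[OF _ assms(2)]\<close>)
    show "indicator Y y * f y \<le> indicator {0..1} y" for y
      using assms(2,3)[of y] mem_Y[of y] by (auto simp: indicator_def)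
  qed simp
  then show "(\<integral>y. indicator Y y * f y \<partial>lborel) \<le> 1" by simp
qed

lemma \<alpha>_bounds: "0 \<le> \<alpha> x" "\<alpha> x \<le> 1"
  unfolding \<alpha>_def by (auto intro!: integral_Y_bounds)

lemma \<beta>_bounds: "0 \<le> \<beta> x" "\<beta> x \<le> 1"
  unfolding \<beta>_def by (auto intro!: integral_Y_bounds)

lemma w_measurable[measurable]: "case_prod w \<in> borel_measurable lborel2"
  unfolding w_def[abs_def] by measurable

lemmas w_measurable'[measurable (raw)] = measurable_compose_lborel2[OF w_measurable]

lemma w_eq_0: "\<not> (x \<in> I \<and> y \<in> Y) \<Longrightarrow> w x y = 0"
  by (auto simp: w_def)

lemma abs_w_le_1: "\<bar>w x y\<bar> \<le> 1"
proof -
  have "0 \<le> \<beta> x * pos (G (x+c) y - G x y)" "\<beta> x * pos (G (x+c) y - G x y) \<le> 1"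
    "0 \<le> \<alpha> x * pos (G x y - G (x+c) y)" "\<alpha> x * pos (G x y - G (x+c) y) \<le> 1"
    using \<alpha>_bounds[of x] \<beta>_bounds[of x] by (auto intro!: mult_le_one)
  then show ?thesis by (auto simp: w_def indicator_def)
qed

lemma w_bounds:
  assumes "x \<in> I" "y \<in> Y"
  shows "G (x+c) y \<le> G x y \<Longrightarrow> - (G x y - G (x+c) y) / 2 \<le> w x y \<and> w x y \<le> 0"
    and "G x y \<le> G (x+c) y \<Longrightarrow> 0 \<le> w x y \<and> w x y \<le> (G (x+c) y - G x y) / 2"
proof -
  assume le: "G (x+c) y \<le> G x y"
  have "\<alpha> x * (G x y - G (x + c) y) \<le> 1 * (G x y - G (x + c) y)"
    using \<alpha>_bounds le by (intro mult_right_mono) auto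
  then show "- (G x y - G (x+c) y) / 2 \<le> w x y \<and> w x y \<le> 0"
    using assms le \<alpha>_bounds by (auto simp: w_def max_def)
next
  assume le: "G x y \<le> G (x+c) y"
  have "\<beta> x * (G (x + c) y - G x y) \<le> 1 * (G (x + c) y - G x y)"
    using \<beta>_bounds le by (intro mult_right_mono) auto
  then show "0 \<le> w x y \<and> w x y \<le> (G (x+c) y - G x y) / 2"
    using assms le \<beta>_bounds by (auto simp: w_def max_def)
qed

lemma w_shift_eq_0: "\<not> (x \<in> J \<and> y \<in> Y) \<Longrightarrow> w (x - c) y = 0"
  using w_eq_0 minus_c_mem_I_iff by blast

lemma P_on_I:
  assumes "x \<in> I" "y \<in> Y"
  shows "P x y = w x y"
proof -
  have "x \<notin> J" "x \<notin> Y" "y \<notin> I" using assms mem_I mem_Y by blast+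
  then show ?thesis by (simp add: P_def w_eq_0 w_shift_eq_0)
qed

lemma P_on_J:
  assumes "x \<in> J" "y \<in> Y"
  shows "P x y = - w (x - c) y"
proof -
  have "x \<notin> I" "y \<notin> I" "y \<notin> J" using assms mem_J mem_Y by blast+
  then show ?thesis by (simp add: P_def w_eq_0 w_shift_eq_0)
qed

lemma P_eq_0:
  assumes "\<not> ((x \<in> I \<union> J \<and> y \<in> Y) \<or> (y \<in> I \<union> J \<and> x \<in> Y))"
  shows "P x y = 0"
proof -
  have "w x y = 0" "w (x - c) y = 0" "w y x = 0" "w (y - c) x = 0"
    using assms by (blast intro: w_eq_0 w_shift_eq_0)+
  then show ?thesis by (simp add: P_def)
qed

lemma P_sym: "P x y = P y x"
  unfolding P_def by simp

lemma H_sym: "H x y = H y x"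
  unfolding H_def using P_sym G_sym by simp

lemma P_measurable[measurable]: "case_prod P \<in> borel_measurable lborel2"
  unfolding P_def[abs_def] by measurable

lemma H_measurable[measurable]: "case_prod H \<in> borel_measurable lborel2"
  unfolding H_def[abs_def] by measurable

lemmas H_measurable'[measurable (raw)] = measurable_compose_lborel2[OF H_measurable]

lemma H_on_I: "x \<in> I \<Longrightarrow> y \<in> Y \<Longrightarrow> H x y = G x y + w x y"
  by (simp add: H_def P_on_I)

lemma H_on_J: "x \<in> I \<Longrightarrow> y \<in> Y \<Longrightarrow> H (x + c) y = G (x + c) y - w x y"
  using P_on_J[of "x + c" y] mem_I[of x] by (simp add: H_def)

lemma H_bounds_on_I_J:
  assumes "x \<in> I" "y \<in> Y"
  shows "0 \<le> H x y \<and> H x y \<le> 1" "0 \<le> H (x + c) y \<and> H (x + c) y \<le> 1"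
proof -
  have G: "0 \<le> G x y" "G x y \<le> 1" "0 \<le> G (x+c) y" "G (x+c) y \<le> 1"
    by (simp_all add: G_nonneg G_le_1)
  have w: "- (G x y - G (x+c) y) / 2 \<le> w x y \<and> w x y \<le> 0 \<or>
      0 \<le> w x y \<and> w x y \<le> (G (x+c) y - G x y) / 2"
    using w_bounds[OF assms] by linarith
  show "0 \<le> H x y \<and> H x y \<le> 1"
    unfolding H_on_I[OF assms] using G w by argo
  show "0 \<le> H (x + c) y \<and> H (x + c) y \<le> 1"
    unfolding H_on_J[OF assms] using G w by argo
qed

lemma H_bounds: "0 \<le> H x y \<and> H x y \<le> 1"
proof -
  have row: "0 \<le> H x y \<and> H x y \<le> 1" if "x \<in> I \<union> J" "y \<in> Y" for x y
  proof (cases "x \<in> I")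
    case False
    with that have "x - c \<in> I" using mem_J by blast
    then show ?thesis using H_bounds_on_I_J(2)[of "x - c" y] that by simp
  qed (use H_bounds_on_I_J(1) that in blast)
  consider "x \<in> I \<union> J" "y \<in> Y" | "y \<in> I \<union> J" "x \<in> Y"
    | "\<not> ((x \<in> I \<union> J \<and> y \<in> Y) \<or> (y \<in> I \<union> J \<and> x \<in> Y))" by blast
  then show ?thesis
  proof cases
    case 3 then show ?thesis using P_eq_0[OF 3] G_nonneg[of x y] G_le_1[of x y] by (simp add: H_def)
  qed (use row H_sym in metis)+
qed

lemma integral_w_row: "(\<integral>y. w x y \<partial>lborel) = 0"
proof -
  have int: "integrable lborel (\<lambda>y. indicator Y y * pos (G (x+c) y - G x y))"
    "integrable lborel (\<lambda>y. indicator Y y * pos (G x y - G (x+c) y))"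
    by (auto intro!: integrable_on_Y simp: abs_le_iff)
  have "(\<integral>y. w x y \<partial>lborel) = (\<integral>y. (indicator I x / 2) * (\<beta> x * (indicator Y y * pos (G (x+c) y - G x y))
      - \<alpha> x * (indicator Y y * pos (G x y - G (x+c) y))) \<partial>lborel)"
    by (intro Bochner_Integration.integral_cong) (simp_all add: w_def indicator_def field_simps)
  also have "\<dots> = (indicator I x / 2) * (\<beta> x * \<alpha> x - \<alpha> x * \<beta> x)"
    using int by (simp add: \<alpha>_def[symmetric] \<beta>_def[symmetric])
  finally show ?thesis by simp
qed

lemma degree_P: "x \<in> {0..1} \<Longrightarrow> (\<integral>y. indicator {0..1} y * P x y \<partial>lborel) = 0"
proof -
  assume x: "x \<in> {0..1}"
  have supp: "w x y = 0 \<and> w (x - c) y = 0 \<and> w y x = 0 \<and> w (y - c) x = 0" if "y \<notin> {0..1}" for y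
    using that w_eq_0 mem_Y mem_I mem_J minus_c_mem_I_iff by blast
  have int: "integrable lborel (\<lambda>y. w x y)" "integrable lborel (\<lambda>y. w (x - c) y)"
    "integrable lborel (\<lambda>y. w y x)" "integrable lborel (\<lambda>y. w (y - c) x)"
    by (auto intro!: integrable_bounded_on_unit_interval abs_w_le_1 dest: supp)
  have "indicator {0..1} y * P x y = w x y - w (x - c) y + w y x - w (y - c) x" for y
    using supp[of y] by (cases "y \<in> {0..1}") (auto simp: P_def)
  moreover have "(\<integral>y. w (y - c) x \<partial>lborel) = (\<integral>y. w y x \<partial>lborel)"
    using lborel_integral_real_affine[where f="\<lambda>y. w (y - c) x" and c=1 and t=c] by simp
  ultimately show ?thesis
    using int integral_w_row[of x] integral_w_row[of "x - c"] by simp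
qed

lemma degree_H: "x \<in> {0..1} \<Longrightarrow> lborel_degree H x = lborel_degree G x"
proof -
  assume x: "x \<in> {0..1}"
  have "\<bar>P x y\<bar> \<le> 1" for y
    using H_bounds[of x y] G_nonneg[of x y] G_le_1[of x y] P_eq_0[of x y]
    by (auto simp: H_def abs_le_iff)
  then have "integrable lborel (\<lambda>y. indicator {0..1} y * P x y)"
    by (intro integrable_bounded_on_unit_interval) (auto simp: indicator_def)
  moreover have "(\<lambda>y. indicator {0..1} y * H x y) = (\<lambda>y. indicator {0..1} y * G x y + indicator {0..1} y * P x y)"
    by (auto simp: H_def algebra_simps)
  ultimately show ?thesis
    unfolding lborel_degree_def using integrable_row[of x] degree_P[OF x] by simp
qed

lemma integrable_on_strip:
  fixes F :: "real \<Rightarrow> real \<Rightarrow> real"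
  assumes "A \<subseteq> {0..1}" "A \<in> sets borel" "case_prod F \<in> borel_measurable lborel2" "\<And>x y. \<bar>F x y\<bar> \<le> B"
  shows "integrable lborel2 (\<lambda>z. indicator A (fst z) * indicator Y (snd z) * F (fst z) (snd z))"
proof (rule integrable_bounded_on_unit_square)
  show "(\<lambda>z. indicator A (fst z) * indicator Y (snd z) * F (fst z) (snd z)) \<in> borel_measurable lborel2"
    using assms(2,3) by measurable
  show "\<bar>indicator A (fst z) * indicator Y (snd z) * F (fst z) (snd z)\<bar> \<le> B * indicator ({0..1} \<times> {0..1}) z" for z
    using assms(1) assms(4)[of "fst z" "snd z"] mem_Y[of "snd z"] by (cases z) (auto simp: indicator_def)
qed

definition "gain x y = bin_entropy (H x y) - bin_entropy (G x y)"
definition "transfer_gain x y = indicator I x * indicator Y y * (gain x y + gain (x + c) y)"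

lemma gain_measurable[measurable]: "case_prod gain \<in> borel_measurable lborel2"
  unfolding gain_def[abs_def] by measurable

lemmas gain_measurable'[measurable (raw)] = measurable_compose_lborel2[OF gain_measurable]

lemma gain_sym: "gain x y = gain y x"
  by (simp add: gain_def H_sym G_sym)

lemma abs_gain_le: "\<bar>gain x y\<bar> \<le> 4"
  using abs_bin_entropy_le[of "H x y"] abs_bin_entropy_le[of "G x y"] H_bounds[of x y]
    G_nonneg[of x y] G_le_1[of x y]
  unfolding gain_def abs_le_iff by auto

lemma gain_eq_0: "\<not> ((x \<in> I \<union> J \<and> y \<in> Y) \<or> (y \<in> I \<union> J \<and> x \<in> Y)) \<Longrightarrow> gain x y = 0"
  using P_eq_0 by (simp add: gain_def H_def)

text \<open>On each pair of entries \<open>(x, y)\<close>, \<open>(x + c, y)\<close> the transfer moves the two values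
  towards each other without overshooting, so concavity of the entropy makes the gain nonnegative.\<close>

lemma pair_gain_nonneg:
  assumes "x \<in> I" "y \<in> Y"
  shows "0 \<le> gain x y + gain (x + c) y" and "w x y \<noteq> 0 \<Longrightarrow> 0 < gain x y + gain (x + c) y"
proof -
  define a where "a = G x y"
  define b where "b = G (x + c) y"
  define t where "t = w x y"
  have ab: "0 \<le> a" "a \<le> 1" "0 \<le> b" "b \<le> 1" by (simp_all add: a_def b_def G_nonneg G_le_1)
  have gain: "gain x y + gain (x + c) y = bin_entropy (a + t) + bin_entropy (b - t) - (bin_entropy a + bin_entropy b)"
    by (simp add: gain_def H_on_I[OF assms] H_on_J[OF assms] a_def b_def t_def)
  have "0 \<le> gain x y + gain (x + c) y \<and> (t \<noteq> 0 \<longrightarrow> 0 < gain x y + gain (x + c) y)"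
  proof (cases "b \<le> a")
    case True
    with w_bounds(1)[OF assms] have t: "- (a - b) / 2 \<le> t" "t \<le> 0" by (auto simp: a_def b_def t_def)
    have "bin_entropy a + bin_entropy b \<le> bin_entropy (a - (- t)) + bin_entropy (b + (- t))"
      by (rule bin_entropy_transfer_le) (use ab t in auto)
    moreover have "t \<noteq> 0 \<Longrightarrow> bin_entropy a + bin_entropy b < bin_entropy (a - (- t)) + bin_entropy (b + (- t))"
      by (rule bin_entropy_transfer_less) (use ab t in auto)
    ultimately show ?thesis unfolding gain by auto
  next
    case False
    with w_bounds(2)[OF assms] have t: "0 \<le> t" "t \<le> (b - a) / 2" by (auto simp: a_def b_def t_def)
    have "bin_entropy b + bin_entropy a \<le> bin_entropy (b - t) + bin_entropy (a + t)"
      by (rule bin_entropy_transfer_le) (use ab t in auto)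
    moreover have "t \<noteq> 0 \<Longrightarrow> bin_entropy b + bin_entropy a < bin_entropy (b - t) + bin_entropy (a + t)"
      by (rule bin_entropy_transfer_less) (use ab t in auto)
    ultimately show ?thesis unfolding gain by auto
  qed
  then show "0 \<le> gain x y + gain (x + c) y" and "w x y \<noteq> 0 \<Longrightarrow> 0 < gain x y + gain (x + c) y"
    by (auto simp: t_def)
qed

lemma transfer_gain_nonneg: "0 \<le> transfer_gain x y"
  using pair_gain_nonneg(1)[of x y] by (auto simp: transfer_gain_def indicator_def)

definition "strip_gain x y = indicator (I \<union> J) x * indicator Y y * gain x y"

lemma strip_gain_measurable[measurable]: "case_prod strip_gain \<in> borel_measurable lborel2"
  unfolding strip_gain_def[abs_def] by measurable

lemma square_entropy_diff_eq_integral_gain: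
  "square_entropy H - square_entropy G = (\<integral>z. indicator ({0..1} \<times> {0..1}) z * gain (fst z) (snd z) \<partial>lborel2)"
proof -
  have int: "integrable lborel2 (\<lambda>z. indicator ({0..1} \<times> {0..1}) z * bin_entropy (case_prod F z))"
    if "case_prod F \<in> borel_measurable lborel2" "\<And>x y. 0 \<le> F x y \<and> F x y \<le> 1" for F
  proof (rule integrable_bounded_on_unit_square[where B=2])
    show "\<bar>indicator ({0..1} \<times> {0..1}) z * bin_entropy (case_prod F z)\<bar> \<le> 2 * indicator ({0..1} \<times> {0..1}) z" for z
      using abs_bin_entropy_le[of "case_prod F z"] that(2)[of "fst z" "snd z"]
      by (cases z) (auto simp: indicator_def)
  qed (use that(1) in measurable)
  have "square_entropy H - square_entropy G = (\<integral>z. indicator ({0..1} \<times> {0..1}) z * bin_entropy (case_prod H z)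
      - indicator ({0..1} \<times> {0..1}) z * bin_entropy (case_prod G z) \<partial>lborel2)"
    unfolding square_entropy_def
    by (rule Bochner_Integration.integral_diff[symmetric])
      (auto intro!: int H_measurable G_measurable simp: H_bounds G_nonneg G_le_1)
  also have "\<dots> = (\<integral>z. indicator ({0..1} \<times> {0..1}) z * gain (fst z) (snd z) \<partial>lborel2)"
    by (intro Bochner_Integration.integral_cong refl) (simp add: gain_def right_diff_distrib case_prod_beta')
  finally show ?thesis .
qed

text \<open>The gain vanishes off the strips \<open>(I \<union> J) \<times> Y\<close> and their mirror images.\<close>

lemma integral_gain_eq_strip_gain:
  "(\<integral>z. indicator ({0..1} \<times> {0..1}) z * gain (fst z) (snd z) \<partial>lborel2) = 2 * integral\<^sup>L lborel2 (case_prod strip_gain)"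
proof -
  have IJ: "I \<union> J \<subseteq> {0..1}" using I_J_subset by blast
  have int: "integrable lborel2 (case_prod strip_gain)"
    using integrable_on_strip[OF IJ _ gain_measurable abs_gain_le] by (simp add: strip_gain_def case_prod_beta')
  have int_swap: "integrable lborel2 (\<lambda>z. strip_gain (snd z) (fst z))"
  proof (rule integrable_bounded_on_unit_square)
    show "\<bar>strip_gain (snd z) (fst z)\<bar> \<le> 4 * indicator ({0..1} \<times> {0..1}) z" for z
      using abs_gain_le[of "snd z" "fst z"] IJ mem_Y[of "fst z"]
      by (cases z) (auto simp: strip_gain_def indicator_def)
  qed measurable
  have split: "indicator ({0..1} \<times> {0..1}) (x, y) * gain x y = strip_gain x y + strip_gain y x" for x y
  proof -
    consider "x \<in> I \<union> J" "y \<in> Y" | "y \<in> I \<union> J" "x \<in> Y"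
      | "\<not> ((x \<in> I \<union> J \<and> y \<in> Y) \<or> (y \<in> I \<union> J \<and> x \<in> Y))" by blast
    then show ?thesis
    proof cases
      case 1
      then show ?thesis using IJ mem_Y[of y] by (auto simp: strip_gain_def indicator_def)
    next
      case 2
      then show ?thesis using IJ mem_Y[of x] gain_sym[of x y] by (auto simp: strip_gain_def indicator_def)
    qed (use gain_eq_0 in \<open>auto simp: strip_gain_def\<close>)
  qed
  have "(\<integral>z. indicator ({0..1} \<times> {0..1}) z * gain (fst z) (snd z) \<partial>lborel2)
      = (\<integral>z. strip_gain (fst z) (snd z) + strip_gain (snd z) (fst z) \<partial>lborel2)"
    by (intro Bochner_Integration.integral_cong refl) (use split[of "fst z" "snd z" for z] in simp)
  also have "\<dots> = 2 * integral\<^sup>L lborel2 (case_prod strip_gain)"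
    using int int_swap integral_lborel2_swap[OF strip_gain_measurable]
    by (simp add: case_prod_beta')
  finally show ?thesis .
qed

text \<open>Translating the \<open>J\<close>-strip by \<open>-c\<close> onto the \<open>I\<close>-strip pairs each entry with its partner.\<close>

lemma integral_strip_gain_eq_transfer_gain:
  "integral\<^sup>L lborel2 (case_prod strip_gain) = integral\<^sup>L lborel2 (case_prod transfer_gain)"
proof -
  let ?strip = "\<lambda>A F. \<lambda>z. indicator A (fst z) * indicator Y (snd z) * F (fst z) (snd z)"
  have shifted_gain: "case_prod (\<lambda>x y. gain (x + c) y) \<in> borel_measurable lborel2"
    by measurable
  have int: "integrable lborel2 (?strip I gain)" "integrable lborel2 (?strip J gain)"
    "integrable lborel2 (?strip I (\<lambda>x y. gain (x + c) y))"
    using integrable_on_strip[OF I_J_subset(1) sets_I_J_Y(1) gain_measurable abs_gain_le]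
      integrable_on_strip[OF I_J_subset(2) sets_I_J_Y(2) gain_measurable abs_gain_le]
      integrable_on_strip[OF I_J_subset(1) sets_I_J_Y(1) shifted_gain abs_gain_le]
    by simp_all
  have "indicator (I \<union> J) x = (indicator I x + indicator J x :: real)" for x
    using I_J_disjoint by (auto simp: indicator_def)
  then have "integral\<^sup>L lborel2 (case_prod strip_gain) = integral\<^sup>L lborel2 (?strip I gain) + integral\<^sup>L lborel2 (?strip J gain)"
    using int by (simp add: strip_gain_def distrib_right case_prod_beta')
  also have "integral\<^sup>L lborel2 (?strip J gain) = integral\<^sup>L lborel2 (?strip I (\<lambda>x y. gain (x + c) y))"
  proof -
    have "indicator J (u + c) = (indicator I u :: real)" for u
      using minus_c_mem_I_iff[of "u + c"] by (simp add: indicator_def)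
    moreover have "?strip J gain \<in> borel_measurable lborel2" by measurable
    ultimately show ?thesis
      using integral_lborel2_translate_fst[of "?strip J gain" c] by simp
  qed
  also have "integral\<^sup>L lborel2 (?strip I gain) + integral\<^sup>L lborel2 (?strip I (\<lambda>x y. gain (x + c) y))
      = integral\<^sup>L lborel2 (case_prod transfer_gain)"
    using int by (simp add: transfer_gain_def distrib_left case_prod_beta' algebra_simps)
  finally show ?thesis .
qed

lemma square_entropy_H_minus_G:
  "square_entropy H - square_entropy G = 2 * integral\<^sup>L lborel2 (case_prod transfer_gain)"
  using square_entropy_diff_eq_integral_gain integral_gain_eq_strip_gain integral_strip_gain_eq_transfer_gain
  by simp

lemma w_AE_eq_0: "AE x in lborel. AE y in lborel. x \<in> I \<and> y \<in> Y \<longrightarrow> w x y = 0"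
proof -
  have "case_prod (\<lambda>x y. gain x y + gain (x + c) y) \<in> borel_measurable lborel2"
    by measurable
  moreover have "\<bar>gain x y + gain (x + c) y\<bar> \<le> 8" for x y
    using abs_gain_le[of x y] abs_gain_le[of "x + c" y] by linarith
  ultimately have int: "integrable lborel2 (case_prod transfer_gain)"
    using integrable_on_strip[OF I_J_subset(1) sets_I_J_Y(1), of "\<lambda>x y. gain x y + gain (x + c) y" 8]
    by (simp add: transfer_gain_def case_prod_beta')
  have "square_entropy H \<le> square_entropy G"
    by (rule entropy_max[OF H_measurable H_sym]) (use H_bounds degree_H in auto)
  then have "integral\<^sup>L lborel2 (case_prod transfer_gain) \<le> 0"
    using square_entropy_H_minus_G by simp
  moreover have "0 \<le> integral\<^sup>L lborel2 (case_prod transfer_gain)"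
    by (intro integral_nonneg_AE AE_I2) (simp add: transfer_gain_nonneg case_prod_beta')
  ultimately have "integral\<^sup>L lborel2 (case_prod transfer_gain) = 0" by linarith
  then have "AE z in lborel2. case_prod transfer_gain z = 0"
    using integral_nonneg_eq_0_iff_AE[OF int] transfer_gain_nonneg by (simp add: case_prod_beta')
  then have "AE z in lborel2. fst z \<in> I \<and> snd z \<in> Y \<longrightarrow> w (fst z) (snd z) = 0"
  proof eventually_elim
    case (elim z)
    show ?case
    proof
      assume z: "fst z \<in> I \<and> snd z \<in> Y"
      with elim have "gain (fst z) (snd z) + gain (fst z + c) (snd z) = 0"
        by (simp add: transfer_gain_def case_prod_beta')
      with z show "w (fst z) (snd z) = 0"
        using pair_gain_nonneg(2)[of "fst z" "snd z"] by auto
    qed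
  qed
  from lborel_pair.AE_pair[OF this] show ?thesis by simp
qed

lemma \<alpha>_mult_\<beta>_eq_0:
  assumes x: "x \<in> I" and ae: "AE y in lborel. x \<in> I \<and> y \<in> Y \<longrightarrow> w x y = 0"
  shows "\<alpha> x * \<beta> x = 0"
proof (rule ccontr)
  assume "\<alpha> x * \<beta> x \<noteq> 0"
  then have pos: "\<alpha> x > 0" "\<beta> x > 0" using \<alpha>_bounds[of x] \<beta>_bounds[of x] by (auto simp: less_le)
  have "AE y in lborel. indicator Y y * pos (G (x+c) y - G x y) = 0"
    using ae
  proof eventually_elim
    case (elim y)
    show ?case
    proof (cases "y \<in> Y")
      case True
      with elim x have "\<beta> x * pos (G (x+c) y - G x y) = \<alpha> x * pos (G x y - G (x+c) y)"
        by (simp add: w_def)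
      then show ?thesis using pos by (auto simp: max_def split: if_splits)
    qed simp
  qed
  then have "\<alpha> x = 0" unfolding \<alpha>_def by (rule integral_eq_zero_AE)
  then show False using pos by simp
qed

lemma row_excess_le:
  assumes x: "x \<in> I" and \<alpha>\<beta>: "\<alpha> x * \<beta> x = 0" and "x \<notin> Z" "x + c \<notin> Z"
  shows "(\<integral>y. indicator {0..1} y * pos (G x y - G (x+c) y) \<partial>lborel) \<le> 4 * (q - p)"
proof -
  have x01: "x \<in> {0..1}" "x + c \<in> {0..1}" using mem_I[OF x] mem_J[of "x + c"] by auto
  have abs_diff: "\<bar>G x y - G (x+c) y\<bar> \<le> 1" for y by (simp add: abs_le_iff)
  have "(\<integral>y. indicator {0..1} y * (G x y - G (x+c) y) \<partial>lborel) = lborel_degree G x - lborel_degree G (x + c)"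
    unfolding lborel_degree_def using integrable_row[of x] integrable_row[of "x + c"]
    by (simp add: right_diff_distrib)
  also have "\<dots> \<le> 0"
    using degree_mono[of x "x + c"] x01 assms c_pos by simp
  finally have degree_le: "(\<integral>y. indicator {0..1} y * (G x y - G (x+c) y) \<partial>lborel) \<le> 0" .
  have "\<beta> x - \<alpha> x = (\<integral>y. indicator Y y * (G x y - G (x+c) y) \<partial>lborel)"
  proof -
    have "\<beta> x - \<alpha> x = (\<integral>y. indicator Y y * pos (G x y - G (x+c) y) - indicator Y y * pos (G (x+c) y - G x y) \<partial>lborel)"
      unfolding \<alpha>_def \<beta>_def
      by (intro Bochner_Integration.integral_diff[symmetric] integrable_on_Y) (auto simp: abs_le_iff)
    also have "\<dots> = (\<integral>y. indicator Y y * (G x y - G (x+c) y) \<partial>lborel)"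
      by (intro Bochner_Integration.integral_cong refl) (auto simp: max_def indicator_def)
    finally show ?thesis .
  qed
  then have "\<beta> x - \<alpha> x \<le> 2 * (q - p)"
    using integral_unit_interval_minus_Y[of "\<lambda>y. G x y - G (x+c) y", OF _ abs_diff] degree_le by simp
  then have "\<beta> x \<le> 2 * (q - p)"
    using \<alpha>\<beta> p_le_q by (cases "\<alpha> x = 0") auto
  moreover have "(\<integral>y. indicator {0..1} y * pos (G x y - G (x+c) y) \<partial>lborel) \<le> \<beta> x + 2 * (q - p)"
    using integral_unit_interval_minus_Y[of "\<lambda>y. pos (G x y - G (x+c) y)"] unfolding \<beta>_def
    by (simp add: abs_le_iff)
  ultimately show ?thesis by simp
qed

lemma row_excess_AE_le:
  "AE x in lborel. x \<in> I \<longrightarrow> (\<integral>y. indicator {0..1} y * pos (G x y - G (x+c) y) \<partial>lborel) \<le> 4 * (q - p)"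
  using w_AE_eq_0 AE_not_in[OF Z_null] AE_lborel_translate_not_in[OF Z_null, of c]
proof eventually_elim
  case (elim x)
  show ?case
  proof
    assume "x \<in> I"
    with elim have "\<alpha> x * \<beta> x = 0" by (intro \<alpha>_mult_\<beta>_eq_0) simp_all
    with elim \<open>x \<in> I\<close> show "(\<integral>y. indicator {0..1} y * pos (G x y - G (x+c) y) \<partial>lborel) \<le> 4 * (q - p)"
      by (intro row_excess_le) (simp_all add: add.commute)
  qed
qed

end

section \<open>Monotonicity off a null set\<close>

definition doubly_monotone_off :: "(real \<times> real) set \<Rightarrow> (real \<Rightarrow> real \<Rightarrow> real) \<Rightarrow> bool" where
  "doubly_monotone_off N g \<longleftrightarrow>
     (\<forall>x1\<in>{0..1}. \<forall>x2\<in>{0..1}. \<forall>y\<in>{0..1}.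
        x1 \<le> x2 \<longrightarrow> (x1, y) \<notin> N \<longrightarrow> (x2, y) \<notin> N \<longrightarrow> g x1 y \<le> g x2 y) \<and>
     (\<forall>x\<in>{0..1}. \<forall>y1\<in>{0..1}. \<forall>y2\<in>{0..1}.
        y1 \<le> y2 \<longrightarrow> (x, y1) \<notin> N \<longrightarrow> (x, y2) \<notin> N \<longrightarrow> g x y1 \<le> g x y2)"

context entropy_maximiser
begin

lemma row_excess_AE_le_interval:
  assumes "0 < c" "0 \<le> p" "p \<le> q" "q + c \<le> 1" "q - p < c"
  shows "AE x in lborel. x \<in> {p..q} \<longrightarrow> (\<integral>y. indicator {0..1} y * pos (G x y - G (x+c) y) \<partial>lborel) \<le> 4 * (q - p)"
proof -
  interpret mass_transfer G Z c p q
    by unfold_locales (use assms in auto)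
  from row_excess_AE_le show ?thesis by (simp add: I_def)
qed

text \<open>Cover \<open>[0, 1 - c]\<close> by intervals of width at most \<open>c / (n + 2)\<close>: the excess of row \<open>x\<close> over
  row \<open>x + c\<close> is at most four times the width of an interval of the cover containing \<open>x\<close>.\<close>

lemma row_excess_AE_eq_0:
  assumes c: "0 < c" "c < 1"
  shows "AE x in lborel. 0 \<le> x \<and> x \<le> 1 - c \<longrightarrow> (\<integral>y. indicator {0..1} y * pos (G x y - G (x+c) y) \<partial>lborel) = 0"
proof -
  define V where "V x = (\<integral>y. indicator {0..1} y * pos (G x y - G (x+c) y) \<partial>lborel)" for x
  define l where "l n = c / (real n + 2)" for n :: nat
  define a where "a n j = real j * l n" for n j :: nat
  define b where "b n j = min ((real j + 1) * l n) (1 - c)" for n j :: nat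
  have l: "0 < l n" "l n < c" for n
    unfolding l_def using c by (simp_all add: divide_less_eq)
  have width: "b n j - a n j \<le> l n" for n j
    by (simp add: a_def b_def algebra_simps)
  have "AE x in lborel. \<forall>n j. a n j \<le> 1 - c \<longrightarrow> x \<in> {a n j..b n j} \<longrightarrow> V x \<le> 4 * (b n j - a n j)"
    unfolding AE_all_countable
  proof (intro allI)
    fix n j
    show "AE x in lborel. a n j \<le> 1 - c \<longrightarrow> x \<in> {a n j..b n j} \<longrightarrow> V x \<le> 4 * (b n j - a n j)"
    proof (cases "a n j \<le> 1 - c")
      case True
      have "AE x in lborel. x \<in> {a n j..b n j} \<longrightarrow> V x \<le> 4 * (b n j - a n j)"
        unfolding V_def
        by (rule row_excess_AE_le_interval) (use c True l[of n] width[of n j] in \<open>auto simp: a_def b_def\<close>)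
      then show ?thesis by simp
    qed simp
  qed
  then have "AE x in lborel. 0 \<le> x \<and> x \<le> 1 - c \<longrightarrow> V x = 0"
  proof eventually_elim
    case (elim x)
    show ?case
    proof
      assume x: "0 \<le> x \<and> x \<le> 1 - c"
      have "V x \<le> 4 * l n" for n
      proof -
        define j where "j = nat \<lfloor>x / l n\<rfloor>"
        have "real j \<le> x / l n" "x / l n < real j + 1" using x l[of n] by (simp_all add: j_def)
        then have "a n j \<le> x" "x \<le> b n j" using x l[of n] by (simp_all add: a_def b_def field_simps)
        then have "V x \<le> 4 * (b n j - a n j)" using elim x by auto
        also have "\<dots> \<le> 4 * l n" using width[of n j] by simp
        finally show ?thesis .
      qed
      moreover have "(\<lambda>n. 4 * l n) \<longlonglongrightarrow> 0"
        unfolding l_def by real_asymp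
      moreover have "0 \<le> V x" unfolding V_def by (intro integral_nonneg_AE AE_I2) auto
      ultimately show "V x = 0"
        using LIMSEQ_le_const[of "\<lambda>n. 4 * l n" 0 "V x"] by force
    qed
  qed
  then show ?thesis by (simp add: V_def)
qed

lemma row_dominance_AE:
  assumes c: "0 < c" "c < 1"
  shows "AE x in lborel. 0 \<le> x \<and> x \<le> 1 - c \<longrightarrow> (AE y in lborel. 0 \<le> y \<and> y \<le> 1 \<longrightarrow> G x y \<le> G (x+c) y)"
  using row_excess_AE_eq_0[OF c]
proof eventually_elim
  case (elim x)
  show ?case
  proof
    assume "0 \<le> x \<and> x \<le> 1 - c"
    moreover have "integrable lborel (\<lambda>y. indicator {0..1} y * pos (G x y - G (x+c) y))"
      by (rule integrable_bounded_on_unit_interval) (auto simp: indicator_def)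
    ultimately have "AE y in lborel. indicator {0..1} y * pos (G x y - G (x+c) y) = 0"
      using elim by (subst (asm) integral_nonneg_eq_0_iff_AE) auto
    then show "AE y in lborel. 0 \<le> y \<and> y \<le> 1 \<longrightarrow> G x y \<le> G (x+c) y"
      by eventually_elim (auto simp: indicator_def max_def split: if_splits)
  qed
qed

definition "shift_le c x y \<longleftrightarrow> (0 \<le> x \<and> x \<le> 1 - c \<and> 0 \<le> y \<and> y \<le> 1 \<longrightarrow> G x y \<le> G (x + c) y)"

lemma shift_le_measurable[measurable]:
  "{z \<in> space lborel2. shift_le c (fst z) (snd z)} \<in> sets lborel2"
  unfolding shift_le_def by measurable

lemma shift_le_AE:
  assumes c: "0 < c" "c < 1"
  shows "AE z in lborel2. shift_le c (fst z) (snd z)"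
proof -
  from row_dominance_AE[OF c] have "AE x in lborel. AE y in lborel. shift_le c x y"
    by eventually_elim (auto simp: shift_le_def intro: AE_I2 elim!: AE_mp)
  then show ?thesis using lborel_pair.AE_pair_iff[OF shift_le_measurable] by simp
qed

text \<open>Fubini, with the shift \<open>c\<close> as an additional variable: almost every point \<open>(x, y)\<close> lies
  below almost every point to its right, and above almost every point to its left.\<close>

lemma shift_le_AE_all_shifts:
  "AE z in lborel2. AE c in lborel. 0 < c \<and> c < 1 \<longrightarrow>
     shift_le c (fst z) (snd z) \<and> shift_le c (fst z - c) (snd z)"
proof -
  interpret pair_sigma_finite "lborel :: real measure" lborel2
    by (intro pair_sigma_finite.intro sigma_finite_lborel) (simp add: lborel_prod sigma_finite_lborel)
  have each: "AE z in lborel2. 0 < c \<and> c < 1 \<longrightarrow> shift_le c (fst z) (snd z) \<and> shift_le c (fst z - c) (snd z)" for c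
  proof (cases "0 < c \<and> c < 1")
    case True
    then have "AE z in lborel2. shift_le c (fst z) (snd z)" "AE z in lborel2. shift_le c (fst z + - c) (snd z)"
      using shift_le_AE AE_lborel2_translate_fst[OF shift_le_measurable shift_le_AE, where a = "- c"] by auto
    then show ?thesis by eventually_elim simp
  qed (rule AE_I2, blast)
  have "AE c in lborel. AE z in lborel2. 0 < c \<and> c < 1 \<longrightarrow>
      shift_le c (fst z) (snd z) \<and> shift_le c (fst z - c) (snd z)"
    by (rule AE_I2) (rule each)
  moreover have "{u \<in> space (lborel \<Otimes>\<^sub>M lborel2). 0 < fst u \<and> fst u < 1 \<longrightarrow>
      shift_le (fst u) (fst (snd u)) (snd (snd u)) \<and> shift_le (fst u) (fst (snd u) - fst u) (snd (snd u))}
      \<in> sets (lborel \<Otimes>\<^sub>M lborel2)"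
    unfolding shift_le_def by measurable
  ultimately show ?thesis
    by (subst (asm) AE_commute) auto
qed

lemma AE_no_crossing:
  assumes x: "x \<in> {0..1}" and y: "y \<in> {0..1}"
    and ae: "AE c in lborel. 0 < c \<and> c < 1 \<longrightarrow> shift_le c x y \<and> shift_le c (x - c) y"
  shows "AE t in lborel. \<not> (x < t \<and> t \<le> 1 \<and> G t y < G x y)"
    and "AE t in lborel. \<not> (0 \<le> t \<and> t < x \<and> G x y < G t y)"
proof -
  have ne1: "AE c in lborel. (c::real) \<noteq> 1"
    using AE_not_in[OF finite_imp_null_set_lborel[of "{1::real}"]] by simp
  have "AE c in lborel. \<not> (x < x + c \<and> x + c \<le> 1 \<and> G (x + c) y < G x y)"
    using ae ne1 by eventually_elim (use x y in \<open>auto simp: shift_le_def\<close>)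
  then show "AE t in lborel. \<not> (x < t \<and> t \<le> 1 \<and> G t y < G x y)"
    by (rule AE_lborel_translateI[rotated]) measurable
  have "AE c in lborel. \<not> (0 \<le> x + - c \<and> x + - c < x \<and> G x y < G (x + - c) y)"
    using ae ne1 by eventually_elim (use x y in \<open>auto simp: shift_le_def\<close>)
  then have "AE u in lborel. \<not> (0 \<le> x + u \<and> x + u < x \<and> G x y < G (x + u) y)"
    by (rule AE_lborel_reflectI[rotated]) measurable
  then show "AE t in lborel. \<not> (0 \<le> t \<and> t < x \<and> G x y < G t y)"
    by (rule AE_lborel_translateI[rotated]) measurable
qed

text \<open>Two good points \<open>x\<^sub>1 < x\<^sub>2\<close> on a row are compared through a third point between them.\<close>

lemma monotone_fst_off_null_set:
  obtains N where "N \<in> null_sets lborel2"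
    "\<And>x1 x2 y. x1 \<in> {0..1} \<Longrightarrow> x2 \<in> {0..1} \<Longrightarrow> y \<in> {0..1} \<Longrightarrow> x1 \<le> x2 \<Longrightarrow>
      (x1, y) \<notin> N \<Longrightarrow> (x2, y) \<notin> N \<Longrightarrow> G x1 y \<le> G x2 y"
proof -
  have "AE z in lborel2. fst z \<in> {0..1} \<and> snd z \<in> {0..1} \<longrightarrow>
      (AE t in lborel. \<not> (fst z < t \<and> t \<le> 1 \<and> G t (snd z) < G (fst z) (snd z))) \<and>
      (AE t in lborel. \<not> (0 \<le> t \<and> t < fst z \<and> G (fst z) (snd z) < G t (snd z)))"
    using shift_le_AE_all_shifts by eventually_elim (use AE_no_crossing in auto)
  then obtain N where N: "N \<in> null_sets lborel2"
    and good: "\<And>x y. x \<in> {0..1} \<Longrightarrow> y \<in> {0..1} \<Longrightarrow> (x, y) \<notin> N \<Longrightarrow>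
      (AE t in lborel. \<not> (x < t \<and> t \<le> 1 \<and> G t y < G x y)) \<and>
      (AE t in lborel. \<not> (0 \<le> t \<and> t < x \<and> G x y < G t y))"
    by (rule AE_obtain_null_set) (auto simp: space_pair_measure)
  show ?thesis
  proof (rule that[OF N])
    fix x1 x2 y :: real
    assume h: "x1 \<in> {0..1}" "x2 \<in> {0..1}" "y \<in> {0..1}" "x1 \<le> x2" "(x1, y) \<notin> N" "(x2, y) \<notin> N"
    show "G x1 y \<le> G x2 y"
    proof (cases "x1 = x2")
      case False
      with h have "x1 < x2" by simp
      moreover have "AE t in lborel. \<not> (x1 < t \<and> t \<le> 1 \<and> G t y < G x1 y) \<and> \<not> (0 \<le> t \<and> t < x2 \<and> G x2 y < G t y)"
        using good[of x1 y] good[of x2 y] h by auto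
      ultimately obtain t where "x1 < t" "t < x2"
        "\<not> (x1 < t \<and> t \<le> 1 \<and> G t y < G x1 y)" "\<not> (0 \<le> t \<and> t < x2 \<and> G x2 y < G t y)"
        using AE_lborel_exists_between by blast
      then show ?thesis using h by auto
    qed simp
  qed
qed

lemma doubly_monotone_off_null_set:
  obtains N where "N \<in> null_sets lborel2" "doubly_monotone_off N G"
proof -
  obtain N where N: "N \<in> null_sets lborel2"
    and mono: "\<And>x1 x2 y. x1 \<in> {0..1} \<Longrightarrow> x2 \<in> {0..1} \<Longrightarrow> y \<in> {0..1} \<Longrightarrow> x1 \<le> x2 \<Longrightarrow>
      (x1, y) \<notin> N \<Longrightarrow> (x2, y) \<notin> N \<Longrightarrow> G x1 y \<le> G x2 y"
    using monotone_fst_off_null_set by blast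
  from AE_lborel2_swap_not_in[OF N]
  obtain N' where N': "N' \<in> null_sets lborel2" "\<And>x y. (x, y) \<notin> N' \<Longrightarrow> (y, x) \<notin> N"
    by (rule AE_obtain_null_set) (auto simp: space_pair_measure)
  show ?thesis
  proof (rule that)
    show "N \<union> N' \<in> null_sets lborel2" using N N' by (intro null_sets.Un)
    show "doubly_monotone_off (N \<union> N') G"
      unfolding doubly_monotone_off_def
    proof (intro conjI ballI impI)
      fix x1 x2 y assume "x1 \<in> {0..1}" "x2 \<in> {0..1}" "y \<in> {0..1}" "x1 \<le> x2"
        "(x1, y) \<notin> N \<union> N'" "(x2, y) \<notin> N \<union> N'"
      then show "G x1 y \<le> G x2 y" by (intro mono) auto
    next
      fix x y1 y2 assume "x \<in> {0..1}" "y1 \<in> {0..1}" "y2 \<in> {0..1}" "y1 \<le> y2"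
        "(x, y1) \<notin> N \<union> N'" "(x, y2) \<notin> N \<union> N'"
      then have "G y1 x \<le> G y2 x" using N'(2) by (intro mono) auto
      then show "G x y1 \<le> G x y2" by (simp only: G_sym[of x])
    qed
  qed
qed

end

section \<open>Borel representatives of graphons\<close>

text \<open>Clamping the symmetrisation of an arbitrary Borel version makes the representative
  symmetric, with values in \<open>[0,1]\<close> everywhere.\<close>

lemma graphon_borel_representative:
  assumes "graphon g"
  obtains G :: "real \<Rightarrow> real \<Rightarrow> real" where "case_prod G \<in> borel_measurable lborel2" "\<And>x y. G x y = G y x"
    "\<And>x y. 0 \<le> G x y" "\<And>x y. G x y \<le> 1"
    "AE z in lborel2. z \<in> {0..1} \<times> {0..1} \<longrightarrow> G (fst z) (snd z) = g (fst z) (snd z)"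
proof -
  let ?S = "{0..1} \<times> {0..1} :: (real \<times> real) set"
  have sym: "\<And>x y. x \<in> {0..1} \<Longrightarrow> y \<in> {0..1} \<Longrightarrow> g x y = g y x"
    and range: "\<And>x y. x \<in> {0..1} \<Longrightarrow> y \<in> {0..1} \<Longrightarrow> 0 \<le> g x y \<and> g x y \<le> 1"
    using assms unfolding graphon_def by auto
  have "(\<lambda>z. indicator ?S z *\<^sub>R (case z of (x, y) \<Rightarrow> g x y)) \<in> borel_measurable lebesgue"
    using assms unfolding graphon_def
    by (subst (asm) borel_measurable_restrict_space_iff) (auto intro: sets_completionI_sets)
  then obtain g' where g': "g' \<in> borel_measurable lborel"
    and "AE z in lborel. indicator ?S z *\<^sub>R (case z of (x, y) \<Rightarrow> g x y) = g' z"
    using completion_ex_borel_measurable_real by blast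
  then have "AE z in lborel2. z \<in> ?S \<longrightarrow> g' z = g (fst z) (snd z)"
    unfolding lborel_prod
  proof eventually_elim
    case (elim z) then show ?case by (cases z) (auto simp: indicator_def)
  qed
  then obtain N where N: "N \<in> null_sets lborel2"
    and g'_eq: "\<And>z. z \<notin> N \<Longrightarrow> z \<in> ?S \<Longrightarrow> g' z = g (fst z) (snd z)"
    by (rule AE_obtain_null_set) (auto simp: space_pair_measure)
  have g'_measurable[measurable]: "g' \<in> borel_measurable lborel2"
    using g' by (simp only: lborel_prod)
  define G where "G x y = max 0 (min 1 ((g' (x, y) + g' (y, x)) / 2))" for x y
  show ?thesis
  proof (rule that)
    show "case_prod G \<in> borel_measurable lborel2"
      unfolding G_def[abs_def] by measurable
    show "AE z in lborel2. z \<in> ?S \<longrightarrow> G (fst z) (snd z) = g (fst z) (snd z)"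
      using AE_not_in[OF N] AE_lborel2_swap_not_in[OF N]
    proof eventually_elim
      case (elim z)
      show ?case
      proof
        assume "z \<in> ?S"
        then show "G (fst z) (snd z) = g (fst z) (snd z)"
          using elim g'_eq[of z] g'_eq[of "(snd z, fst z)"] sym[of "fst z" "snd z"] range[of "fst z" "snd z"]
          by (auto simp: G_def mem_Times_iff)
      qed
    qed
  qed (auto simp: G_def add.commute)
qed

lemma degree_fun_AE_eq_lborel_degree:
  assumes G: "case_prod G \<in> borel_measurable lborel2"
    and eq: "AE z in lborel2. z \<in> {0..1} \<times> {0..1} \<longrightarrow> G (fst z) (snd z) = g (fst z) (snd z)"
  shows "AE x in lborel. x \<in> {0..1} \<longrightarrow> degree_fun g x = lborel_degree G x"
  using lborel_pair.AE_pair[OF eq]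
proof eventually_elim
  case (elim x)
  show ?case
  proof
    assume x: "x \<in> {0..1}"
    have [measurable]: "(\<lambda>y. G x y) \<in> borel_measurable lborel"
      using G by measurable
    have G_row: "(\<lambda>y. indicator {0..1} y * G x y) \<in> borel_measurable lebesgue"
      by (rule measurable_completion) measurable
    have "AE y in lborel. indicator {0..1} y * G x y = indicator {0..1} y *\<^sub>R g x y"
      using elim by eventually_elim (use x in \<open>auto simp: indicator_def\<close>)
    then have ae: "AE y in lebesgue. indicator {0..1} y * G x y = indicator {0..1} y *\<^sub>R g x y"
      by (rule AE_completion)
    have "degree_fun g x = integral\<^sup>L lebesgue (\<lambda>y. indicator {0..1} y *\<^sub>R g x y)"
      unfolding degree_fun_def by (rule integral_restrict_space) auto
    also have "\<dots> = integral\<^sup>L lebesgue (\<lambda>y. indicator {0..1} y * G x y)"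
      using ae by (intro integral_cong_AE borel_measurable_AE[OF G_row ae] G_row) (auto elim: AE_mp)
    also have "\<dots> = lborel_degree G x"
      unfolding lborel_degree_def by (rule integral_completion) measurable
    finally show "degree_fun g x = lborel_degree G x" .
  qed
qed

lemma graphon_entropy_eq_square_entropy:
  assumes g: "(\<lambda>(x, y). g x y) \<in> borel_measurable (lebesgue_on ({0..1} \<times> {0..1}))"
    and G: "case_prod G \<in> borel_measurable lborel2"
    and eq: "AE z in lborel2. z \<in> {0..1} \<times> {0..1} \<longrightarrow> G (fst z) (snd z) = g (fst z) (snd z)"
  shows "graphon_entropy g = square_entropy G / 2"
proof -
  let ?S = "{0..1} \<times> {0..1} :: (real \<times> real) set"
  have S: "?S \<in> sets lebesgue" by (intro sets_completionI_sets) simp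
  have g_entropy: "(\<lambda>z. indicator ?S z *\<^sub>R bin_entropy (case z of (x, y) \<Rightarrow> g x y)) \<in> borel_measurable lebesgue"
    using measurable_compose[OF g borel_measurable_bin_entropy] S
    by (subst (asm) borel_measurable_restrict_space_iff) (auto simp: case_prod_beta')
  note measurable_compose_lborel2[OF G, measurable (raw)]
  have "(\<lambda>z. indicator ?S z * bin_entropy (G (fst z) (snd z))) \<in> borel_measurable lborel2"
    by measurable
  then have G_entropy: "(\<lambda>z. indicator ?S z * bin_entropy (case_prod G z)) \<in> borel_measurable lborel"
    by (simp only: lborel_prod case_prod_beta')
  have "AE z in lborel. indicator ?S z *\<^sub>R bin_entropy (case z of (x, y) \<Rightarrow> g x y)
      = indicator ?S z * bin_entropy (case_prod G z)"
    using eq unfolding lborel_prod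
    by eventually_elim (auto simp: indicator_def case_prod_beta')
  then have "AE z in lebesgue. indicator ?S z *\<^sub>R bin_entropy (case z of (x, y) \<Rightarrow> g x y)
      = indicator ?S z * bin_entropy (case_prod G z)"
    by (rule AE_completion)
  then have "integral\<^sup>L lebesgue (\<lambda>z. indicator ?S z *\<^sub>R bin_entropy (case z of (x, y) \<Rightarrow> g x y))
      = integral\<^sup>L lebesgue (\<lambda>z. indicator ?S z * bin_entropy (case_prod G z))"
    by (intro integral_cong_AE g_entropy measurable_completion[OF G_entropy])
  also have "\<dots> = square_entropy G"
    unfolding square_entropy_def by (subst integral_completion[OF G_entropy]) (simp add: lborel_prod)
  finally show ?thesis
    unfolding graphon_entropy_def using S by (subst integral_restrict_space) (auto simp: case_prod_beta')
qed

lemma borel_measurable_lebesgue_on_unit_square: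
  assumes "case_prod H \<in> borel_measurable lborel2"
  shows "(\<lambda>(x, y). H x y) \<in> borel_measurable (lebesgue_on ({0..1} \<times> {0..1}))"
proof -
  have [measurable]: "case_prod H \<in> borel_measurable lborel" using assms by (simp only: lborel_prod)
  show ?thesis by (intro measurable_restrict_space1 measurable_completion) measurable
qed

lemma degree_fun_eq_lborel_degree:
  assumes "case_prod H \<in> borel_measurable lborel2"
  shows "degree_fun H x = lborel_degree H x"
  unfolding degree_fun_def lborel_degree_def
  by (rule integral_lebesgue_on_eq_lborel) (use assms in measurable)

lemma graphon_entropy_eq_square_entropy_borel:
  assumes "case_prod H \<in> borel_measurable lborel2"
  shows "graphon_entropy H = square_entropy H / 2"
  by (rule graphon_entropy_eq_square_entropy[OF borel_measurable_lebesgue_on_unit_square[OF assms] assms]) simp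

lemma square_entropy_le_if_graphon_entropy_max:
  assumes "graphon g"
    and max: "\<And>h. graphon h \<Longrightarrow> (AE x in lebesgue_on {0..1}. degree_fun h x = degree_fun g x) \<Longrightarrow>
      graphon_entropy h \<le> graphon_entropy g"
    and G: "case_prod G \<in> borel_measurable lborel2"
    and eq: "AE z in lborel2. z \<in> {0..1} \<times> {0..1} \<longrightarrow> G (fst z) (snd z) = g (fst z) (snd z)"
    and H: "case_prod H \<in> borel_measurable lborel2" "\<And>x y. H x y = H y x"
      "\<And>x y. x \<in> {0..1} \<Longrightarrow> y \<in> {0..1} \<Longrightarrow> 0 \<le> H x y \<and> H x y \<le> 1"
      "\<And>x. x \<in> {0..1} \<Longrightarrow> lborel_degree H x = lborel_degree G x"
  shows "square_entropy H \<le> square_entropy G"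
proof -
  have "graphon H"
    unfolding graphon_def using borel_measurable_lebesgue_on_unit_square[OF H(1)] H(2,3) by auto
  moreover have "AE x in lebesgue_on {0..1}. degree_fun H x = degree_fun g x"
  proof (rule AE_lebesgue_onI)
    show "AE x in lborel. x \<in> {0..1} \<longrightarrow> degree_fun H x = degree_fun g x"
      using degree_fun_AE_eq_lborel_degree[OF G eq]
      by eventually_elim (simp add: H(4) degree_fun_eq_lborel_degree[OF H(1)])
  qed simp
  ultimately have "graphon_entropy H \<le> graphon_entropy g" by (rule max)
  moreover have "graphon_entropy g = square_entropy G / 2"
    using assms(1) G eq unfolding graphon_def by (intro graphon_entropy_eq_square_entropy) auto
  ultimately show ?thesis
    using graphon_entropy_eq_square_entropy_borel[OF H(1)] by simp
qed

lemma entropy_maximiser_of_graphon: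
  assumes "graphon g" and "mono_on {0..1} (degree_fun g)"
    and max: "\<And>h. graphon h \<Longrightarrow> (AE x in lebesgue_on {0..1}. degree_fun h x = degree_fun g x) \<Longrightarrow>
      graphon_entropy h \<le> graphon_entropy g"
    and G: "case_prod G \<in> borel_measurable lborel2" "\<And>x y. G x y = G y x" "\<And>x y. 0 \<le> G x y" "\<And>x y. G x y \<le> 1"
    and eq: "AE z in lborel2. z \<in> {0..1} \<times> {0..1} \<longrightarrow> G (fst z) (snd z) = g (fst z) (snd z)"
  obtains Z where "entropy_maximiser G Z"
proof (rule AE_obtain_null_set[OF degree_fun_AE_eq_lborel_degree[OF G(1) eq]])
  fix Z assume Z: "Z \<in> null_sets lborel"
    "\<And>x. x \<in> space lborel \<Longrightarrow> x \<notin> Z \<Longrightarrow> x \<in> {0..1} \<longrightarrow> degree_fun g x = lborel_degree G x"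
  have "entropy_maximiser G Z"
  proof
    show "lborel_degree G x1 \<le> lborel_degree G x2"
      if "x1 \<in> {0..1}" "x2 \<in> {0..1}" "x1 \<notin> Z" "x2 \<notin> Z" "x1 \<le> x2" for x1 x2
      using mono_onD[OF assms(2), of x1 x2] that Z(2)[of x1] Z(2)[of x2] by simp
  next
    fix H :: "real \<Rightarrow> real \<Rightarrow> real"
    assume H: "case_prod H \<in> borel_measurable lborel2" "\<And>x y. H x y = H y x"
      "\<And>x y. x \<in> {0..1} \<Longrightarrow> y \<in> {0..1} \<Longrightarrow> 0 \<le> H x y \<and> H x y \<le> 1"
      "\<And>x. x \<in> {0..1} \<Longrightarrow> lborel_degree H x = lborel_degree G x"
    show "square_entropy H \<le> square_entropy G"
      by (rule square_entropy_le_if_graphon_entropy_max[OF assms(1) max G(1) eq H])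
  qed (fact G Z(1))+
  then show thesis by (rule that)
qed

lemma doubly_monotone_off_AE_eq:
  assumes "N \<in> null_sets lborel2" "doubly_monotone_off N G"
    and "AE z in lborel2. z \<in> {0..1} \<times> {0..1} \<longrightarrow> G (fst z) (snd z) = g (fst z) (snd z)"
  obtains N' where "N' \<in> null_sets lebesgue" "doubly_monotone_off N' g"
proof (rule AE_obtain_null_set[OF assms(3)])
  fix E assume E: "E \<in> null_sets lborel2"
    "\<And>z. z \<in> space lborel2 \<Longrightarrow> z \<notin> E \<Longrightarrow> z \<in> {0..1} \<times> {0..1} \<longrightarrow> G (fst z) (snd z) = g (fst z) (snd z)"
  show thesis
  proof (rule that)
    show "N \<union> E \<in> null_sets lebesgue"
      using null_sets.Un[OF assms(1) E(1)] by (intro null_sets_completionI) (simp only: lborel_prod)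
    have "G x y = g x y" if "(x, y) \<notin> E" "x \<in> {0..1}" "y \<in> {0..1}" for x y
      using E(2)[of "(x, y)"] that by (simp add: space_pair_measure)
    then show "doubly_monotone_off (N \<union> E) g"
      using assms(2) unfolding doubly_monotone_off_def by (metis UnCI)
  qed
qed

theorem theorem3p1:
  fixes g :: "real \<Rightarrow> real \<Rightarrow> real"
  assumes "graphon g"
    and "mono_on {0..1} (degree_fun g)"
    and "\<And>h. graphon h \<Longrightarrow>
           (AE x in lebesgue_on {0..1}. degree_fun h x = degree_fun g x) \<Longrightarrow>
           graphon_entropy h \<le> graphon_entropy g"
  shows "\<exists>N :: (real \<times> real) set. N \<in> null_sets lebesgue \<and>
           (\<forall>x1\<in>{0..1}. \<forall>x2\<in>{0..1}. \<forall>y\<in>{0..1}.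
              x1 \<le> x2 \<longrightarrow> (x1, y) \<notin> N \<longrightarrow> (x2, y) \<notin> N \<longrightarrow> g x1 y \<le> g x2 y) \<and>
           (\<forall>x\<in>{0..1}. \<forall>y1\<in>{0..1}. \<forall>y2\<in>{0..1}.
              y1 \<le> y2 \<longrightarrow> (x, y1) \<notin> N \<longrightarrow> (x, y2) \<notin> N \<longrightarrow> g x y1 \<le> g x y2)"
proof (rule graphon_borel_representative[OF assms(1)])
  fix G :: "real \<Rightarrow> real \<Rightarrow> real"
  assume G: "case_prod G \<in> borel_measurable lborel2" "\<And>x y. G x y = G y x"
      "\<And>x y. 0 \<le> G x y" "\<And>x y. G x y \<le> 1"
    and eq: "AE z in lborel2. z \<in> {0..1} \<times> {0..1} \<longrightarrow> G (fst z) (snd z) = g (fst z) (snd z)"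
  obtain Z where "entropy_maximiser G Z"
    by (rule entropy_maximiser_of_graphon[OF assms G eq])
  then interpret entropy_maximiser G Z .
  obtain N where "N \<in> null_sets lborel2" "doubly_monotone_off N G"
    by (rule doubly_monotone_off_null_set)
  then obtain N' where "N' \<in> null_sets lebesgue" "doubly_monotone_off N' g"
    using doubly_monotone_off_AE_eq eq by blast
  then show ?thesis unfolding doubly_monotone_off_def by blast
qed

end
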